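(* Let $\mathcal{E}_{\mathrm{MUB}}$ be a set of $2^n+1$ unitaries on $(\mathbb{C}^2)^{\otimes n}$ such that the orthonormal bases $\{U^{\dagger}|\mathbf{b}\rangle:\mathbf{b}\in\{0,1\}^n\}$, $U\in\mathcal{E}_{\mathrm{MUB}}$, form a complete set of mutually unbiased bases. Let $O$ be a Hermitian observable and $O_0=O-\operatorname{tr}(O)\mathbb{I}/2^n$. Then $$\|O_0\|^2_{\mathrm{s},\mathcal{E}_{\mathrm{MUB}}}\le(2^n+1)\operatorname{tr}(O_0^2),\qquad \|O_0\|^2_{\mathrm{ls},\mathcal{E}_{\mathrm{MUB}}}=\frac{2^n+1}{2^n}\operatorname{tr}(O_0^2).$$
   Context: Bases $\{|e_k\rangle\}$ and $\{|f_l\rangle\}$ of $\mathbb{C}^{2^n}$ are mutually unbiased if $|\langle e_k|f_l\rangle|^2=2^{-n}$ for all $k,l$; a complete set consists of $2^n+1$ pairwise mutually unbiased bases. Shadow estimation with ensemble $\mathcal{E}$: given a state $\rho$, pick $U\in\mathcal{E}$ uniformly at random, measure $U\rho U^{\dagger}$ in the computational basis, obtaining $\mathbf{b}$ with probability $\langle\mathbf{b}|U\rho U^{\dagger}|\mathbf{b}\rangle$, and form the snapshot $\hat\rho=\mathcal{M}_{Cl}^{-1}(U^{\dagger}|\mathbf{b}\rangle\langle\mathbf{b}|U)$ where $\mathcal{M}_{Cl}^{-1}(A)=(2^n+1)A-\operatorname{tr}(A)\mathbb{I}$. The shadow norm is $\|O_0\|^2_{\mathrm{s},\mathcal{E}}=\max_{\rho}\mathbb{E}_{U,\mathbf{b}}[\operatorname{tr}(O_0\hat\rho)^2]$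 (maximum over density operators $\rho$), and the locally-scrambled shadow norm $\|O_0\|^2_{\mathrm{ls},\mathcal{E}}$ is the same expectation evaluated at $\rho=\mathbb{I}/2^n$. *)

theory Defs
  imports "Jordan_Normal_Form.Schur_Decomposition"
begin

(* Matrices are complex d x d JNF matrices, d = 2^n; computational basis |b>, b in {0,1}^n,
   is identified with unit_vec d b, b < d. *)

definition mtrace :: "complex mat \<Rightarrow> complex" where
  "mtrace A = (\<Sum>i<dim_row A. A $$ (i,i))"

definition unitary_m :: "nat \<Rightarrow> complex mat \<Rightarrow> bool" where
  "unitary_m d U \<longleftrightarrow> U \<in> carrier_mat d d \<and> U * mat_adjoint U = 1\<^sub>m d \<and> mat_adjoint U * U = 1\<^sub>m d"

definition hermitian_m :: "nat \<Rightarrow> complex mat \<Rightarrow> bool" where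
  "hermitian_m d A \<longleftrightarrow> A \<in> carrier_mat d d \<and> mat_adjoint A = A"

definition braket :: "complex vec \<Rightarrow> complex vec \<Rightarrow> complex" where
  "braket v w = conjugate v \<bullet> w"

definition density_op :: "nat \<Rightarrow> complex mat \<Rightarrow> bool" where
  "density_op d \<rho> \<longleftrightarrow> hermitian_m d \<rho> \<and> mtrace \<rho> = 1 \<and>
     (\<forall>v \<in> carrier_vec d. 0 \<le> Re (braket v (\<rho> *\<^sub>v v)))"

definition ketbra :: "complex vec \<Rightarrow> complex vec \<Rightarrow> complex mat" where
  "ketbra v w = mat (dim_vec v) (dim_vec w) (\<lambda>(i,j). v $ i * cnj (w $ j))"

definition basis_vec :: "nat \<Rightarrow> complex mat \<Rightarrow> nat \<Rightarrow> complex vec" where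
  "basis_vec d U b = mat_adjoint U *\<^sub>v unit_vec d b"

definition mutually_unbiased :: "nat \<Rightarrow> complex mat \<Rightarrow> complex mat \<Rightarrow> bool" where
  "mutually_unbiased d U V \<longleftrightarrow>
     (\<forall>k<d. \<forall>l<d. (cmod (braket (basis_vec d U k) (basis_vec d V l)))\<^sup>2 = 1 / real d)"

definition complete_MUB_ensemble :: "nat \<Rightarrow> complex mat set \<Rightarrow> bool" where
  "complete_MUB_ensemble d E \<longleftrightarrow> finite E \<and> card E = d + 1 \<and> (\<forall>U\<in>E. unitary_m d U) \<and>
     (\<forall>U\<in>E. \<forall>V\<in>E. U \<noteq> V \<longrightarrow> mutually_unbiased d U V)"

definition M_Cl_inv :: "nat \<Rightarrow> complex mat \<Rightarrow> complex mat" where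
  "M_Cl_inv d A = of_nat (d + 1) \<cdot>\<^sub>m A - mtrace A \<cdot>\<^sub>m 1\<^sub>m d"

definition snapshot :: "nat \<Rightarrow> complex mat \<Rightarrow> nat \<Rightarrow> complex mat" where
  "snapshot d U b = M_Cl_inv d (mat_adjoint U * ketbra (unit_vec d b) (unit_vec d b) * U)"

definition outcome_prob :: "nat \<Rightarrow> complex mat \<Rightarrow> complex mat \<Rightarrow> nat \<Rightarrow> complex" where
  "outcome_prob d \<rho> U b = braket (unit_vec d b) ((U * \<rho> * mat_adjoint U) *\<^sub>v unit_vec d b)"

(* E_{U,b}[tr(O0 rho_hat)^2], U uniform on E *)
definition shadow_expect :: "nat \<Rightarrow> complex mat set \<Rightarrow> complex mat \<Rightarrow> complex mat \<Rightarrow> complex" where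
  "shadow_expect d E O0 \<rho> = (1 / of_nat (card E)) *
     (\<Sum>U\<in>E. \<Sum>b<d. outcome_prob d \<rho> U b * (mtrace (O0 * snapshot d U b))\<^sup>2)"

definition shadow_norm_sq :: "nat \<Rightarrow> complex mat set \<Rightarrow> complex mat \<Rightarrow> real" where
  "shadow_norm_sq d E O0 = Sup {Re (shadow_expect d E O0 \<rho>) | \<rho>. density_op d \<rho>}"

definition ls_shadow_norm_sq :: "nat \<Rightarrow> complex mat set \<Rightarrow> complex mat \<Rightarrow> real" where
  "ls_shadow_norm_sq d E O0 = Re (shadow_expect d E O0 ((1 / of_nat d) \<cdot>\<^sub>m 1\<^sub>m d))"

end

theory Submission
  imports Defs
begin

(* A complete set of mutually unbiased bases in dimension d consists of d (d + 1) unit vectors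
   u_i = U^dagger |b> whose frame potential sum_{i,j} |<u_i, u_j>|^4 equals 2 d (d + 1): each vector
   contributes 1 from its own basis and d^2 times 1/d^2 from the other d bases. Expanding the squared
   distance between sum_i (u_i u_i^dagger) (x) (u_i u_i^dagger) and I + SWAP shows that it vanishes,
   so the vectors form a projective 2-design and sum_i <u_i|A|u_i>^2 = tr (A^2) + (tr A)^2 for every A.

   For traceless O0 the snapshot of outcome u_i satisfies tr (O0 rho_hat) = (d + 1) <u_i|O0|u_i>, hence
   E [tr (O0 rho_hat)^2] = (d + 1) sum_i <u_i|rho|u_i> <u_i|O0|u_i>^2. The outcome probabilities
   <u_i|rho|u_i> lie in [0, 1], which bounds the shadow norm by (d + 1) tr (O0^2); for rho = I/d they
   all equal 1/d, which gives the locally scrambled shadow norm. *)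

(* The simplifier does not case-split an if whose branches mention a bound variable. *)
lemma sum_if_const_zero: "(\<Sum>x\<in>A. if P then f x else 0) = (if P then sum f A else 0)"
  by simp

lemma mult_if_one_zero: "x * (if P then 1 else 0) = (if P then x else (0::'a::{mult_zero,monoid_mult}))"
  by simp

lemma sum_swap_outer2:
  "(\<Sum>a\<in>A. \<Sum>b\<in>B. \<Sum>i\<in>I. f a b i) = (\<Sum>i\<in>I. \<Sum>a\<in>A. \<Sum>b\<in>B. f a b i)"
  by (simp add: sum.swap[of _ _ I])

lemma sum_swap_outer4:
  "(\<Sum>a\<in>A. \<Sum>b\<in>B. \<Sum>c\<in>C. \<Sum>e\<in>D. \<Sum>i\<in>I. f a b c e i) =
   (\<Sum>i\<in>I. \<Sum>a\<in>A. \<Sum>b\<in>B. \<Sum>c\<in>C. \<Sum>e\<in>D. f a b c e i)"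
  by (simp add: sum.swap[of _ _ I])

section \<open>Projective 2-designs and the frame potential\<close>

definition inner_coords :: "nat \<Rightarrow> (nat \<Rightarrow> complex) \<Rightarrow> (nat \<Rightarrow> complex) \<Rightarrow> complex" where
  "inner_coords d v w = (\<Sum>a<d. cnj (v a) * w a)"

definition quad_form :: "nat \<Rightarrow> (nat \<Rightarrow> complex) \<Rightarrow> (nat \<Rightarrow> nat \<Rightarrow> complex) \<Rightarrow> complex" where
  "quad_form d v A = (\<Sum>a<d. \<Sum>c<d. cnj (v a) * A a c * v c)"

lemma quad_form_cong:
  "(\<And>a. a < d \<Longrightarrow> v a = w a) \<Longrightarrow> (\<And>a c. a < d \<Longrightarrow> c < d \<Longrightarrow> A a c = B a c) \<Longrightarrow>
   quad_form d v A = quad_form d w B"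
  unfolding quad_form_def by (auto intro!: sum.cong)

lemma inner_coords_self: "inner_coords d v v = of_real (\<Sum>a<d. (cmod (v a))\<^sup>2)"
  unfolding inner_coords_def of_real_sum complex_norm_square by (simp add: mult.commute)

lemma quad_form_scalar: "quad_form d v (\<lambda>a c. if a = c then k else 0) = k * inner_coords d v v"
proof -
  have "cnj (v a) * (if a = c then k else 0) * v c = (if a = c then k * (cnj (v a) * v a) else 0)" for a c
    by simp
  then show ?thesis
    unfolding quad_form_def inner_coords_def by (simp add: sum_distrib_left)
qed

lemma cnj_quad_form_hermitian:
  assumes "\<And>a c. a < d \<Longrightarrow> c < d \<Longrightarrow> cnj (A a c) = A c a"
  shows "cnj (quad_form d v A) = quad_form d v A"
proof -
  have "cnj (quad_form d v A) = (\<Sum>a<d. \<Sum>c<d. v a * A c a * cnj (v c))"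
    unfolding quad_form_def using assms by simp
  also have "\<dots> = quad_form d v A"
    unfolding quad_form_def by (subst sum.swap) (simp add: mult_ac)
  finally show ?thesis .
qed

definition frame_potential :: "nat \<Rightarrow> ('i \<Rightarrow> nat \<Rightarrow> complex) \<Rightarrow> 'i set \<Rightarrow> real" where
  "frame_potential d u I = (\<Sum>i\<in>I. \<Sum>j\<in>I. (cmod (inner_coords d (u i) (u j)))^4)"

(* projective_2design d u I is the entrywise form of
   sum_i (u_i u_i^dagger) (x) (u_i u_i^dagger) = I + SWAP  on C^d (x) C^d,
   with row index (b, e) and column index (a, c). *)
definition fourth_moment ::
    "('i \<Rightarrow> nat \<Rightarrow> complex) \<Rightarrow> 'i set \<Rightarrow> nat \<Rightarrow> nat \<Rightarrow> nat \<Rightarrow> nat \<Rightarrow> complex" where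
  "fourth_moment u I a b c e = (\<Sum>i\<in>I. cnj (u i a) * u i b * cnj (u i c) * u i e)"

definition id_plus_swap :: "nat \<Rightarrow> nat \<Rightarrow> nat \<Rightarrow> nat \<Rightarrow> complex" where
  "id_plus_swap a b c e = (if a = b \<and> c = e then 1 else 0) + (if a = e \<and> b = c then 1 else 0)"

definition projective_2design :: "nat \<Rightarrow> ('i \<Rightarrow> nat \<Rightarrow> complex) \<Rightarrow> 'i set \<Rightarrow> bool" where
  "projective_2design d u I \<longleftrightarrow>
     (\<forall>a<d. \<forall>b<d. \<forall>c<d. \<forall>e<d. fourth_moment u I a b c e = id_plus_swap a b c e)"

lemma sum_if_pairs_ab_ce:
  "(\<Sum>a<d::nat. \<Sum>b<d. \<Sum>c<d. \<Sum>e<d. if a = b \<and> c = e then F a b c e else 0) =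
   (\<Sum>a<d. \<Sum>c<d. F a a c c :: 'a::comm_monoid_add)"
  by (simp add: if_if_eq_conj[symmetric] sum_if_const_zero cong: if_cong)

lemma sum_if_pairs_ae_bc:
  "(\<Sum>a<d::nat. \<Sum>b<d. \<Sum>c<d. \<Sum>e<d. if a = e \<and> b = c then F a b c e else 0) =
   (\<Sum>a<d. \<Sum>b<d. F a b b a :: 'a::comm_monoid_add)"
  by (simp add: if_if_eq_conj[symmetric] cong: if_cong)

lemma sum_mult_id_plus_swap:
  "(\<Sum>a<d::nat. \<Sum>b<d. \<Sum>c<d. \<Sum>e<d. F a b c e * id_plus_swap a b c e) =
   (\<Sum>a<d. \<Sum>c<d. F a a c c) + (\<Sum>a<d. \<Sum>b<d. F a b b a)"
proof -
  have "F a b c e * id_plus_swap a b c e =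
      (if a = b \<and> c = e then F a b c e else 0) + (if a = e \<and> b = c then F a b c e else 0)" for a b c e
    unfolding id_plus_swap_def distrib_left
    by (simp only: mult_1_right mult_zero_right if_distrib[of "\<lambda>x. F a b c e * x"])
  then show ?thesis
    by (simp only: sum.distrib sum_if_pairs_ab_ce sum_if_pairs_ae_bc)
qed

lemma sum_id_plus_swap_sq:
  "(\<Sum>a<d::nat. \<Sum>b<d. \<Sum>c<d. \<Sum>e<d. id_plus_swap a b c e * id_plus_swap a b c e) = of_nat (2 * d * (d + 1))"
proof -
  have "id_plus_swap a a c c = 1 + (if a = c then 1 else 0)" "id_plus_swap a c c a = 1 + (if a = c then 1 else 0)"
    for a c
    by (simp_all add: id_plus_swap_def)
  then show ?thesis
    unfolding sum_mult_id_plus_swap by (simp add: sum.distrib distrib_left)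
qed

lemma sum_fourth_moment_norm_sq:
  "(\<Sum>a<d. \<Sum>b<d. \<Sum>c<d. \<Sum>e<d. fourth_moment u I a b c e * cnj (fourth_moment u I a b c e)) =
     of_real (frame_potential d u I)"
proof -
  let ?t = "\<lambda>i j a b c e. (cnj (u i a) * u j a) * cnj (cnj (u i b) * u j b) *
      (cnj (u i c) * u j c) * cnj (cnj (u i e) * u j e)"
  have fourth_power: "z * cnj z * z * cnj z = of_real (cmod z ^ 4)" for z :: complex
  proof -
    have "z * cnj z * z * cnj z = (z * cnj z)^2" by (simp add: power2_eq_square mult_ac)
    also have "\<dots> = of_real ((cmod z ^ 2) ^ 2)" by (simp flip: complex_norm_square)
    finally show ?thesis by (simp flip: power_mult)
  qed
  have "fourth_moment u I a b c e * cnj (fourth_moment u I a b c e) = (\<Sum>i\<in>I. \<Sum>j\<in>I. ?t i j a b c e)" for a b c e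
    unfolding fourth_moment_def sum_product cnj_sum
    by (intro sum.cong refl) (simp add: mult_ac)
  then have "(\<Sum>a<d. \<Sum>b<d. \<Sum>c<d. \<Sum>e<d. fourth_moment u I a b c e * cnj (fourth_moment u I a b c e)) =
      (\<Sum>a<d. \<Sum>b<d. \<Sum>c<d. \<Sum>e<d. \<Sum>i\<in>I. \<Sum>j\<in>I. ?t i j a b c e)"
    by simp
  also have "\<dots> = (\<Sum>i\<in>I. \<Sum>a<d. \<Sum>b<d. \<Sum>c<d. \<Sum>e<d. \<Sum>j\<in>I. ?t i j a b c e)"
    by (rule sum_swap_outer4)
  also have "\<dots> = (\<Sum>i\<in>I. \<Sum>j\<in>I. \<Sum>a<d. \<Sum>b<d. \<Sum>c<d. \<Sum>e<d. ?t i j a b c e)"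
    by (rule sum.cong[OF refl], rule sum_swap_outer4)
  also have "\<dots> = (\<Sum>i\<in>I. \<Sum>j\<in>I. inner_coords d (u i) (u j) * cnj (inner_coords d (u i) (u j)) *
      inner_coords d (u i) (u j) * cnj (inner_coords d (u i) (u j)))"
    unfolding inner_coords_def cnj_sum
    by (simp only: sum_distrib_left[symmetric] sum_distrib_right[symmetric])
  finally show ?thesis
    by (simp add: fourth_power frame_potential_def)
qed

lemma sum_fourth_moment_mult_id_plus_swap:
  assumes unit: "\<And>i. i \<in> I \<Longrightarrow> inner_coords d (u i) (u i) = 1"
  shows "(\<Sum>a<d. \<Sum>b<d. \<Sum>c<d. \<Sum>e<d. fourth_moment u I a b c e * id_plus_swap a b c e) = 2 * of_nat (card I)"
proof -
  have "(\<Sum>a<d. \<Sum>b<d. \<Sum>c<d. \<Sum>e<d. fourth_moment u I a b c e * id_plus_swap a b c e) =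
      (\<Sum>i\<in>I. \<Sum>a<d. \<Sum>b<d. \<Sum>c<d. \<Sum>e<d.
         cnj (u i a) * u i b * cnj (u i c) * u i e * id_plus_swap a b c e)"
    unfolding fourth_moment_def sum_distrib_right by (rule sum_swap_outer4)
  also have "\<dots> = (\<Sum>i\<in>I. 2)"
  proof (rule sum.cong[OF refl])
    fix i assume "i \<in> I"
    then have unit_i: "(\<Sum>a<d. cnj (u i a) * u i a) = 1"
      using unit by (simp add: inner_coords_def)
    have "(\<Sum>a<d. \<Sum>c<d. cnj (u i a) * u i a * cnj (u i c) * u i c) =
        (\<Sum>a<d. cnj (u i a) * u i a) * (\<Sum>c<d. cnj (u i c) * u i c)"
      by (simp add: sum_product mult.assoc)
    moreover have "(\<Sum>a<d. \<Sum>b<d. cnj (u i a) * u i b * cnj (u i b) * u i a) =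
        (\<Sum>a<d. cnj (u i a) * u i a) * (\<Sum>b<d. cnj (u i b) * u i b)"
      by (simp add: sum_product mult_ac)
    ultimately show "(\<Sum>a<d. \<Sum>b<d. \<Sum>c<d. \<Sum>e<d.
        cnj (u i a) * u i b * cnj (u i c) * u i e * id_plus_swap a b c e) = 2"
      unfolding sum_mult_id_plus_swap unit_i by simp
  qed
  finally show ?thesis by simp
qed

lemma norm_sq_diff_real:
  fixes z t :: complex
  assumes "cnj t = t"
  shows "of_real ((cmod (z - t))\<^sup>2) = z * cnj z - z * t - t * cnj z + t * t"
proof -
  have "of_real ((cmod (z - t))\<^sup>2) = (z - t) * cnj (z - t)"
    by (rule complex_norm_square)
  also have "\<dots> = (z - t) * (cnj z - t)"
    using assms by simp
  finally show ?thesis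
    by (simp add: algebra_simps)
qed

lemma projective_2design_if_frame_potential:
  assumes unit: "\<And>i. i \<in> I \<Longrightarrow> inner_coords d (u i) (u i) = 1"
    and potential: "frame_potential d u I = 2 * card I"
    and card: "card I = d * (d + 1)"
  shows "projective_2design d u I"
proof -
  let ?G = "fourth_moment u I" and ?T = id_plus_swap
  have real_T: "cnj (?T a b c e) = ?T a b c e" for a b c e
    unfolding id_plus_swap_def
    by (simp only: complex_cnj_add if_distrib[of cnj] complex_cnj_one complex_cnj_zero)
  have "(\<Sum>a<d. \<Sum>b<d. \<Sum>c<d. \<Sum>e<d. of_real ((cmod (?G a b c e - ?T a b c e))\<^sup>2)) =
      (\<Sum>a<d. \<Sum>b<d. \<Sum>c<d. \<Sum>e<d. ?G a b c e * cnj (?G a b c e) - ?G a b c e * ?T a b c e -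
         ?T a b c e * cnj (?G a b c e) + ?T a b c e * ?T a b c e)"
    by (simp only: norm_sq_diff_real[OF real_T])
  also have "\<dots> =
      (\<Sum>a<d. \<Sum>b<d. \<Sum>c<d. \<Sum>e<d. ?G a b c e * cnj (?G a b c e)) -
      (\<Sum>a<d. \<Sum>b<d. \<Sum>c<d. \<Sum>e<d. ?G a b c e * ?T a b c e) -
      cnj (\<Sum>a<d. \<Sum>b<d. \<Sum>c<d. \<Sum>e<d. ?G a b c e * ?T a b c e) +
      (\<Sum>a<d. \<Sum>b<d. \<Sum>c<d. \<Sum>e<d. ?T a b c e * ?T a b c e)"
    by (simp only: sum.distrib sum_subtractf cnj_sum complex_cnj_mult real_T mult.commute)
  (* = frame potential - 2 card I - 2 card I + 2 d (d + 1) *)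
  also have "\<dots> = 0"
    using potential card
    by (simp add: sum_fourth_moment_norm_sq sum_fourth_moment_mult_id_plus_swap[OF unit] sum_id_plus_swap_sq)
  finally have "(\<Sum>a<d. \<Sum>b<d. \<Sum>c<d. \<Sum>e<d. (cmod (?G a b c e - ?T a b c e))\<^sup>2) = 0"
    by (simp only: of_real_sum[symmetric] of_real_eq_0_iff)
  then show ?thesis
    unfolding projective_2design_def by (simp add: sum_nonneg_eq_0_iff sum_nonneg)
qed

lemma sum_quad_form_sq_eq_fourth_moment:
  "(\<Sum>i\<in>I. (quad_form d (u i) A)\<^sup>2) =
   (\<Sum>a<d. \<Sum>b<d. \<Sum>c<d. \<Sum>e<d. A a b * A c e * fourth_moment u I a b c e)"
proof -
  have "(quad_form d (u i) A)\<^sup>2 = (\<Sum>a<d. \<Sum>b<d. \<Sum>c<d. \<Sum>e<d.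
      A a b * A c e * (cnj (u i a) * u i b * cnj (u i c) * u i e))" for i
  proof -
    have "(quad_form d (u i) A)\<^sup>2 = (\<Sum>a<d. \<Sum>b<d. \<Sum>c<d. \<Sum>e<d.
        (cnj (u i a) * A a b * u i b) * (cnj (u i c) * A c e * u i e))"
      unfolding quad_form_def power2_eq_square
      by (simp only: sum_distrib_left[symmetric] sum_distrib_right[symmetric])
    then show ?thesis by (simp add: mult_ac)
  qed
  then have "(\<Sum>i\<in>I. (quad_form d (u i) A)\<^sup>2) = (\<Sum>i\<in>I. \<Sum>a<d. \<Sum>b<d. \<Sum>c<d. \<Sum>e<d.
      A a b * A c e * (cnj (u i a) * u i b * cnj (u i c) * u i e))"
    by simp
  also have "\<dots> = (\<Sum>a<d. \<Sum>b<d. \<Sum>c<d. \<Sum>e<d. \<Sum>i\<in>I.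
      A a b * A c e * (cnj (u i a) * u i b * cnj (u i c) * u i e))"
    by (rule sum_swap_outer4[symmetric])
  also have "\<dots> = (\<Sum>a<d. \<Sum>b<d. \<Sum>c<d. \<Sum>e<d. A a b * A c e * fourth_moment u I a b c e)"
    by (simp add: fourth_moment_def sum_distrib_left)
  finally show ?thesis .
qed

lemma sum_quad_form_sq_projective_2design:
  assumes "projective_2design d u I"
  shows "(\<Sum>i\<in>I. (quad_form d (u i) A)\<^sup>2) = (\<Sum>a<d. \<Sum>c<d. A a c * A c a) + (\<Sum>a<d. A a a)\<^sup>2"
proof -
  have "(\<Sum>i\<in>I. (quad_form d (u i) A)\<^sup>2) =
      (\<Sum>a<d. \<Sum>b<d. \<Sum>c<d. \<Sum>e<d. A a b * A c e * id_plus_swap a b c e)"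
    using assms unfolding sum_quad_form_sq_eq_fourth_moment projective_2design_def by simp
  also have "\<dots> = (\<Sum>a<d. \<Sum>c<d. A a a * A c c) + (\<Sum>a<d. \<Sum>b<d. A a b * A b a)"
    by (rule sum_mult_id_plus_swap)
  finally show ?thesis
    by (simp add: power2_eq_square sum_product)
qed

lemma mat_adjoint_carrier: "A \<in> carrier_mat d d \<Longrightarrow> mat_adjoint A \<in> carrier_mat d d"
  unfolding mat_adjoint_def by auto

lemma index_mat_adjoint:
  "A \<in> carrier_mat d d \<Longrightarrow> i < d \<Longrightarrow> j < d \<Longrightarrow> mat_adjoint A $$ (i, j) = cnj (A $$ (j, i))"
  unfolding mat_adjoint_def by (simp add: mat_of_rows_index)

lemma braket_eq_sum:
  "v \<in> carrier_vec d \<Longrightarrow> w \<in> carrier_vec d \<Longrightarrow> braket v w = (\<Sum>a<d. cnj (v $ a) * w $ a)"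
  unfolding braket_def by (simp add: scalar_prod_def atLeast0LessThan)

lemma braket_unit_vec:
  assumes "v \<in> carrier_vec d" "b < d"
  shows "braket (unit_vec d b) v = v $ b"
proof -
  have "conjugate (unit_vec d b) = (unit_vec d b :: complex vec)"
    by (rule eq_vecI) (use assms(2) in simp_all)
  then show ?thesis
    unfolding braket_def using assms by simp
qed

lemma braket_mult_mat_vec:
  assumes v: "v \<in> carrier_vec d" and M: "M \<in> carrier_mat d d"
  shows "braket v (M *\<^sub>v v) = quad_form d (($) v) (\<lambda>a c. M $$ (a, c))"
  unfolding braket_eq_sum[OF v mult_mat_vec_carrier[OF M v]] quad_form_def
  using assms by (auto simp: scalar_prod_def atLeast0LessThan sum_distrib_left mult.assoc intro!: sum.cong)

lemma mtrace_mult: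
  assumes "A \<in> carrier_mat d d" "B \<in> carrier_mat d d"
  shows "mtrace (A * B) = (\<Sum>a<d. \<Sum>c<d. A $$ (a, c) * B $$ (c, a))"
  unfolding mtrace_def using assms
  by (auto simp: scalar_prod_def atLeast0LessThan intro!: sum.cong)

lemma hermitian_m_index:
  "hermitian_m d A \<Longrightarrow> a < d \<Longrightarrow> c < d \<Longrightarrow> cnj (A $$ (a, c)) = A $$ (c, a)"
  unfolding hermitian_m_def by (metis index_mat_adjoint)

lemma cnj_mtrace_hermitian:
  assumes "hermitian_m d A"
  shows "cnj (mtrace A) = mtrace A"
  using assms hermitian_m_index[OF assms] unfolding mtrace_def hermitian_m_def
  by (auto intro!: sum.cong)

lemma cnj_quad_form_hermitian_m:
  assumes "hermitian_m d Q"
  shows "cnj (quad_form d v (\<lambda>a c. Q $$ (a, c))) = quad_form d v (\<lambda>a c. Q $$ (a, c))"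
  by (rule cnj_quad_form_hermitian) (simp add: hermitian_m_index[OF assms])

definition basis_coord :: "complex mat \<Rightarrow> nat \<Rightarrow> nat \<Rightarrow> complex" where
  "basis_coord U b a = cnj (U $$ (b, a))"

lemma basis_vec_carrier: "U \<in> carrier_mat d d \<Longrightarrow> basis_vec d U b \<in> carrier_vec d"
  unfolding basis_vec_def by (metis mat_adjoint_carrier mult_mat_vec_carrier unit_vec_carrier)

lemma index_basis_vec:
  assumes "U \<in> carrier_mat d d" "a < d" "b < d"
  shows "basis_vec d U b $ a = basis_coord U b a"
  using assms mat_adjoint_carrier[OF assms(1)]
  by (simp add: basis_vec_def basis_coord_def index_mat_adjoint)

lemma braket_basis_vec:
  assumes U: "U \<in> carrier_mat d d" and V: "V \<in> carrier_mat d d" and "b < d" "c < d"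
  shows "braket (basis_vec d U b) (basis_vec d V c) = inner_coords d (basis_coord U b) (basis_coord V c)"
  unfolding braket_eq_sum[OF basis_vec_carrier[OF U] basis_vec_carrier[OF V]] inner_coords_def
  using assms by (auto intro!: sum.cong simp: index_basis_vec)

lemma braket_basis_vec_mult:
  assumes U: "U \<in> carrier_mat d d" and M: "M \<in> carrier_mat d d" and "b < d"
  shows "braket (basis_vec d U b) (M *\<^sub>v basis_vec d U b) = quad_form d (basis_coord U b) (\<lambda>a c. M $$ (a, c))"
  unfolding braket_mult_mat_vec[OF basis_vec_carrier[OF U] M]
  using assms by (intro quad_form_cong) (simp_all add: index_basis_vec)

lemma inner_coords_unitary:
  assumes "unitary_m d U" "b < d" "c < d"
  shows "inner_coords d (basis_coord U b) (basis_coord U c) = (if b = c then 1 else 0)"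
proof -
  have U: "U \<in> carrier_mat d d" and "U * mat_adjoint U = 1\<^sub>m d"
    using assms(1) unfolding unitary_m_def by auto
  then have "(U * mat_adjoint U) $$ (b, c) = (if b = c then 1 else 0)"
    using assms by simp
  moreover have "(U * mat_adjoint U) $$ (b, c) = inner_coords d (basis_coord U b) (basis_coord U c)"
    using assms U mat_adjoint_carrier[OF U]
    by (auto simp: scalar_prod_def atLeast0LessThan index_mat_adjoint inner_coords_def basis_coord_def
        intro!: sum.cong)
  ultimately show ?thesis by simp
qed

lemma basis_coord_completeness:
  assumes "unitary_m d U" "a < d" "c < d"
  shows "(\<Sum>b<d. basis_coord U b a * cnj (basis_coord U b c)) = (if a = c then 1 else 0)"
proof -
  have U: "U \<in> carrier_mat d d" and "mat_adjoint U * U = 1\<^sub>m d"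
    using assms(1) unfolding unitary_m_def by auto
  then have "(mat_adjoint U * U) $$ (a, c) = (if a = c then 1 else 0)"
    using assms by simp
  moreover have "(mat_adjoint U * U) $$ (a, c) = (\<Sum>b<d. basis_coord U b a * cnj (basis_coord U b c))"
    using assms U mat_adjoint_carrier[OF U]
    by (auto simp: scalar_prod_def atLeast0LessThan index_mat_adjoint basis_coord_def intro!: sum.cong)
  ultimately show ?thesis by simp
qed

section \<open>Complete sets of mutually unbiased bases\<close>

lemma norm_inner_coords_mutually_unbiased:
  assumes "mutually_unbiased d U V" and "U \<in> carrier_mat d d" "V \<in> carrier_mat d d" and "b < d" "c < d"
  shows "(cmod (inner_coords d (basis_coord U b) (basis_coord V c)))\<^sup>2 = 1 / real d"
proof -
  have "(cmod (braket (basis_vec d U b) (basis_vec d V c)))\<^sup>2 = 1 / real d"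
    using assms(1,4,5) unfolding mutually_unbiased_def by blast
  then show ?thesis
    by (simp add: braket_basis_vec[OF assms(2-5)])
qed

lemma frame_potential_complete_MUB:
  assumes E: "complete_MUB_ensemble d E" and "d > 0"
  shows "frame_potential d (case_prod basis_coord) (E \<times> {..<d}) = 2 * card (E \<times> {..<d})"
proof -
  have fin: "finite E" and card: "card E = d + 1" and unitary: "\<And>U. U \<in> E \<Longrightarrow> unitary_m d U"
    and mub: "\<And>U V. U \<in> E \<Longrightarrow> V \<in> E \<Longrightarrow> U \<noteq> V \<Longrightarrow> mutually_unbiased d U V"
    using E unfolding complete_MUB_ensemble_def by auto
  have carrier: "U \<in> carrier_mat d d" if "U \<in> E" for U
    using unitary[OF that] unfolding unitary_m_def by simp
  have row: "(\<Sum>j\<in>E \<times> {..<d}. (cmod (inner_coords d (basis_coord U b) (case_prod basis_coord j)))^4) = 2"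
    if U: "U \<in> E" and b: "b < d" for U b
  proof -
    let ?f = "\<lambda>V c. (cmod (inner_coords d (basis_coord U b) (basis_coord V c)))^4"
    have "?f U c = (if b = c then 1 else 0)" if "c < d" for c
      using inner_coords_unitary[OF unitary[OF U] b that] by simp
    then have same_basis: "(\<Sum>c<d. ?f U c) = 1"
      using b by simp
    have "?f V c = (1 / real d)\<^sup>2" if V: "V \<in> E - {U}" and c: "c < d" for V c
    proof -
      have "(cmod (inner_coords d (basis_coord U b) (basis_coord V c)))\<^sup>2 = 1 / real d"
        using V by (intro norm_inner_coords_mutually_unbiased mub carrier U b c) auto
      moreover have "?f V c = ((cmod (inner_coords d (basis_coord U b) (basis_coord V c)))\<^sup>2)\<^sup>2"
        by (simp flip: power_mult)
      ultimately show ?thesis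
        by simp
    qed
    then have other_bases: "(\<Sum>V\<in>E - {U}. \<Sum>c<d. ?f V c) = 1"
      using fin card U \<open>d > 0\<close> by (simp add: card_Diff_singleton power2_eq_square)
    have "(\<Sum>(V, c)\<in>E \<times> {..<d}. ?f V c) = (\<Sum>c<d. ?f U c) + (\<Sum>V\<in>E - {U}. \<Sum>c<d. ?f V c)"
      unfolding sum.cartesian_product[symmetric] by (rule sum.remove[OF fin U])
    then show ?thesis
      using same_basis other_bases by (simp add: split_def)
  qed
  have "(\<Sum>j\<in>E \<times> {..<d}. (cmod (inner_coords d (case_prod basis_coord i) (case_prod basis_coord j)))^4) = 2"
    if "i \<in> E \<times> {..<d}" for i
    using row that by auto
  then show ?thesis
    unfolding frame_potential_def by simp
qed

lemma projective_2design_complete_MUB: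
  assumes E: "complete_MUB_ensemble d E" and "d > 0"
  shows "projective_2design d (case_prod basis_coord) (E \<times> {..<d})"
proof (rule projective_2design_if_frame_potential)
  have fin: "finite E" and card: "card E = d + 1" and unitary: "\<And>U. U \<in> E \<Longrightarrow> unitary_m d U"
    using E unfolding complete_MUB_ensemble_def by auto
  show "inner_coords d (case_prod basis_coord i) (case_prod basis_coord i) = 1" if "i \<in> E \<times> {..<d}" for i
    using that inner_coords_unitary[OF unitary] by auto
  show "frame_potential d (case_prod basis_coord) (E \<times> {..<d}) = 2 * card (E \<times> {..<d})"
    by (rule frame_potential_complete_MUB[OF assms])
  show "card (E \<times> {..<d}) = d * (d + 1)"
    using fin card by (simp add: card_cartesian_product)
qed

lemma sum_quad_form_sq_complete_MUB:
  assumes "complete_MUB_ensemble d E" and "d > 0"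
  shows "(\<Sum>U\<in>E. \<Sum>b<d. (quad_form d (basis_coord U b) A)\<^sup>2) =
    (\<Sum>a<d. \<Sum>c<d. A a c * A c a) + (\<Sum>a<d. A a a)\<^sup>2"
  using sum_quad_form_sq_projective_2design[OF projective_2design_complete_MUB[OF assms], of A]
  by (simp add: sum.cartesian_product case_prod_beta)

section \<open>Measurement statistics and snapshots\<close>

lemma outcome_prob_eq_quad_form:
  assumes U: "U \<in> carrier_mat d d" and \<rho>: "\<rho> \<in> carrier_mat d d" and b: "b < d"
  shows "outcome_prob d \<rho> U b = quad_form d (basis_coord U b) (\<lambda>a c. \<rho> $$ (a, c))"
proof -
  let ?M = "U * \<rho> * mat_adjoint U"
  have M: "?M \<in> carrier_mat d d"
    using U \<rho> mat_adjoint_carrier[OF U] by auto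
  have "outcome_prob d \<rho> U b = ?M $$ (b, b)"
    unfolding outcome_prob_def using M b carrier_matD[OF M] by (simp add: braket_unit_vec)
  also have "\<dots> = (\<Sum>a<d. U $$ (b, a) * (\<Sum>c<d. \<rho> $$ (a, c) * cnj (U $$ (b, c))))"
    using assms mat_adjoint_carrier[OF U]
    by (auto simp: scalar_prod_def atLeast0LessThan index_mat_adjoint intro!: sum.cong)
  also have "\<dots> = quad_form d (basis_coord U b) (\<lambda>a c. \<rho> $$ (a, c))"
    unfolding quad_form_def basis_coord_def by (simp add: sum_distrib_left mult.assoc)
  finally show ?thesis .
qed

lemma outcome_prob_nonneg:
  assumes \<rho>: "density_op d \<rho>" and U: "U \<in> carrier_mat d d" and b: "b < d"
  shows "0 \<le> Re (outcome_prob d \<rho> U b)"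
proof -
  have \<rho>_carrier: "\<rho> \<in> carrier_mat d d"
    and "0 \<le> Re (braket (basis_vec d U b) (\<rho> *\<^sub>v basis_vec d U b))"
    using \<rho> basis_vec_carrier[OF U] unfolding density_op_def hermitian_m_def by auto
  then show ?thesis
    by (simp add: braket_basis_vec_mult[OF U _ b] outcome_prob_eq_quad_form[OF U _ b])
qed

lemma sum_outcome_prob:
  assumes u: "unitary_m d U" and \<rho>: "\<rho> \<in> carrier_mat d d"
  shows "(\<Sum>b<d. outcome_prob d \<rho> U b) = mtrace \<rho>"
proof -
  have U: "U \<in> carrier_mat d d"
    using u unfolding unitary_m_def by simp
  have "(\<Sum>b<d. outcome_prob d \<rho> U b) =
      (\<Sum>b<d. \<Sum>a<d. \<Sum>c<d. \<rho> $$ (a, c) * (basis_coord U b c * cnj (basis_coord U b a)))"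
    by (simp add: outcome_prob_eq_quad_form[OF U \<rho>] quad_form_def mult_ac)
  also have "\<dots> = (\<Sum>a<d. \<Sum>c<d. \<Sum>b<d. \<rho> $$ (a, c) * (basis_coord U b c * cnj (basis_coord U b a)))"
    by (rule sum_swap_outer2[symmetric])
  also have "\<dots> = (\<Sum>a<d. \<Sum>c<d. if c = a then \<rho> $$ (a, c) else 0)"
    by (simp add: sum_distrib_left[symmetric] basis_coord_completeness[OF u] mult_if_one_zero)
  also have "\<dots> = mtrace \<rho>"
    using \<rho> by (simp add: mtrace_def)
  finally show ?thesis .
qed

lemma Re_outcome_prob_le_one:
  assumes \<rho>: "density_op d \<rho>" and u: "unitary_m d U" and b: "b < d"
  shows "Re (outcome_prob d \<rho> U b) \<le> 1"
proof -
  have U: "U \<in> carrier_mat d d"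
    using u unfolding unitary_m_def by simp
  have "Re (outcome_prob d \<rho> U b) \<le> (\<Sum>b'<d. Re (outcome_prob d \<rho> U b'))"
    by (rule member_le_sum) (use b outcome_prob_nonneg[OF \<rho> U] in auto)
  also have "\<dots> = Re (mtrace \<rho>)"
    using \<rho> by (simp add: Re_sum[symmetric] sum_outcome_prob[OF u] density_op_def hermitian_m_def)
  finally show ?thesis
    using \<rho> by (simp add: density_op_def)
qed

lemma outcome_prob_maximally_mixed:
  assumes u: "unitary_m d U" and b: "b < d"
  shows "outcome_prob d ((1 / of_nat d) \<cdot>\<^sub>m 1\<^sub>m d) U b = 1 / of_nat d"
proof -
  have U: "U \<in> carrier_mat d d"
    using u unfolding unitary_m_def by simp
  have "outcome_prob d ((1 / of_nat d) \<cdot>\<^sub>m 1\<^sub>m d) U b =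
      quad_form d (basis_coord U b) (\<lambda>a c. if a = c then 1 / of_nat d else 0)"
    unfolding outcome_prob_eq_quad_form[OF U _ b, of "(1 / of_nat d) \<cdot>\<^sub>m 1\<^sub>m d", simplified]
    by (rule quad_form_cong) simp_all
  then show ?thesis
    by (simp add: quad_form_scalar inner_coords_unitary[OF u b b])
qed

lemma density_op_maximally_mixed:
  assumes "d > 0"
  shows "density_op d ((1 / of_nat d) \<cdot>\<^sub>m 1\<^sub>m d)"
proof -
  let ?r = "(1 / of_nat d) \<cdot>\<^sub>m 1\<^sub>m d :: complex mat"
  have r: "?r \<in> carrier_mat d d"
    by simp
  have "mat_adjoint ?r = ?r"
    by (rule eq_matI) (use mat_adjoint_carrier[OF r] in \<open>auto simp: index_mat_adjoint[OF r]\<close>)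
  moreover have "mtrace ?r = 1"
    using assms by (simp add: mtrace_def)
  moreover have "0 \<le> Re (braket v (?r *\<^sub>v v))" if v: "v \<in> carrier_vec d" for v
  proof -
    have "braket v (?r *\<^sub>v v) = quad_form d (($) v) (\<lambda>a c. if a = c then 1 / of_nat d else 0)"
      unfolding braket_mult_mat_vec[OF v r] by (rule quad_form_cong) simp_all
    then show ?thesis
      by (simp add: quad_form_scalar inner_coords_self sum_nonneg)
  qed
  ultimately show ?thesis
    unfolding density_op_def hermitian_m_def by simp
qed

lemma index_basis_projector:
  assumes U: "U \<in> carrier_mat d d" and a: "a < d" and b: "b < d" and c: "c < d"
  shows "(mat_adjoint U * ketbra (unit_vec d b) (unit_vec d b) * U) $$ (a, c) =
    basis_coord U b a * cnj (basis_coord U b c)"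
proof -
  let ?K = "ketbra (unit_vec d b) (unit_vec d b) :: complex mat"
  have K: "?K \<in> carrier_mat d d"
    unfolding ketbra_def by simp
  have AK: "mat_adjoint U * ?K \<in> carrier_mat d d"
    using mat_adjoint_carrier[OF U] K by simp
  have AK_index: "(mat_adjoint U * ?K) $$ (a, l) = (if l = b then basis_coord U b a else 0)" if l: "l < d" for l
    using U a b l mat_adjoint_carrier[OF U] K
    by (auto simp: scalar_prod_def atLeast0LessThan ketbra_def index_mat_adjoint basis_coord_def mult_if_one_zero)
  have "(mat_adjoint U * ?K * U) $$ (a, c) = (\<Sum>l<d. (mat_adjoint U * ?K) $$ (a, l) * U $$ (l, c))"
    using U a c carrier_matD[OF AK] by (auto simp: scalar_prod_def atLeast0LessThan intro!: sum.cong)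
  also have "\<dots> = (\<Sum>l<d. if l = b then basis_coord U b a * U $$ (l, c) else 0)"
    by (intro sum.cong refl) (simp add: AK_index)
  finally show ?thesis
    using b by (simp add: basis_coord_def)
qed

lemma index_snapshot:
  assumes u: "unitary_m d U" and "a < d" "b < d" "c < d"
  shows "snapshot d U b $$ (a, c) =
    of_nat (d + 1) * (basis_coord U b a * cnj (basis_coord U b c)) - (if a = c then 1 else 0)"
proof -
  let ?P = "mat_adjoint U * ketbra (unit_vec d b) (unit_vec d b) * U"
  have U: "U \<in> carrier_mat d d"
    using u unfolding unitary_m_def by simp
  have P: "?P \<in> carrier_mat d d"
    using mat_adjoint_carrier[OF U] U unfolding ketbra_def by auto
  have "mtrace ?P = inner_coords d (basis_coord U b) (basis_coord U b)"
    using P unfolding mtrace_def inner_coords_def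
    by (auto simp: index_basis_projector[OF U _ \<open>b < d\<close>] mult.commute intro!: sum.cong)
  then have "mtrace ?P = 1"
    using inner_coords_unitary[OF u \<open>b < d\<close> \<open>b < d\<close>] by simp
  then show ?thesis
    unfolding snapshot_def M_Cl_inv_def using assms carrier_matD[OF P] by (simp add: index_basis_projector[OF U] del: index_mult_mat)
qed

lemma mtrace_mult_snapshot:
  assumes u: "unitary_m d U" and b: "b < d" and Q: "Q \<in> carrier_mat d d"
  shows "mtrace (Q * snapshot d U b) = of_nat (d + 1) * quad_form d (basis_coord U b) (\<lambda>a c. Q $$ (a, c)) - mtrace Q"
proof -
  have U: "U \<in> carrier_mat d d"
    using u unfolding unitary_m_def by simp
  have S: "snapshot d U b \<in> carrier_mat d d"
    using mat_adjoint_carrier[OF U] U unfolding snapshot_def M_Cl_inv_def ketbra_def by auto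
  have "mtrace (Q * snapshot d U b) = (\<Sum>a<d. \<Sum>c<d. Q $$ (a, c) * snapshot d U b $$ (c, a))"
    by (rule mtrace_mult[OF Q S])
  also have "\<dots> = (\<Sum>a<d. \<Sum>c<d. of_nat (d + 1) * (cnj (basis_coord U b a) * Q $$ (a, c) * basis_coord U b c) -
      (if a = c then Q $$ (a, c) else 0))"
    by (intro sum.cong refl) (simp add: index_snapshot[OF u _ b] algebra_simps)
  also have "\<dots> = of_nat (d + 1) * quad_form d (basis_coord U b) (\<lambda>a c. Q $$ (a, c)) - mtrace Q"
    using Q by (simp add: quad_form_def mtrace_def sum_subtractf sum_distrib_left)
  finally show ?thesis .
qed

lemma shadow_expect_traceless:
  assumes card: "card E = d + 1" and unitary: "\<And>U. U \<in> E \<Longrightarrow> unitary_m d U"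
    and Q: "Q \<in> carrier_mat d d" and traceless: "mtrace Q = 0"
  shows "shadow_expect d E Q \<rho> = of_nat (d + 1) *
    (\<Sum>U\<in>E. \<Sum>b<d. outcome_prob d \<rho> U b * (quad_form d (basis_coord U b) (\<lambda>a c. Q $$ (a, c)))\<^sup>2)"
proof -
  let ?n = "of_nat (d + 1) :: complex"
  let ?q = "\<lambda>U b. quad_form d (basis_coord U b) (\<lambda>a c. Q $$ (a, c))"
  have "(mtrace (Q * snapshot d U b))\<^sup>2 = ?n\<^sup>2 * (?q U b)\<^sup>2" if "U \<in> E" "b < d" for U b
    using mtrace_mult_snapshot[OF unitary[OF that(1)] that(2) Q] traceless
    by (simp add: power_mult_distrib)
  then have "shadow_expect d E Q \<rho> = (1 / ?n) * (\<Sum>U\<in>E. \<Sum>b<d. outcome_prob d \<rho> U b * (?n\<^sup>2 * (?q U b)\<^sup>2))"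
    unfolding shadow_expect_def card
    by (intro arg_cong[where f = "(*) (1 / ?n)"] sum.cong refl) simp
  also have "\<dots> = ?n * (\<Sum>U\<in>E. \<Sum>b<d. outcome_prob d \<rho> U b * (?q U b)\<^sup>2)"
  proof -
    have "(1 / n) * (p * (n\<^sup>2 * x)) = n * (p * x)" if "n \<noteq> 0" for n p x :: complex
      using that by (simp add: power2_eq_square field_simps)
    then show ?thesis
      by (simp add: sum_distrib_left del: of_nat_Suc)
  qed
  finally show ?thesis .
qed

section \<open>Shadow norms of traceless observables\<close>

lemma Re_mult_power2_real:
  fixes p z :: complex
  assumes "cnj z = z"
  shows "Re (p * z\<^sup>2) = Re p * (Re z)\<^sup>2"
proof -
  have "Im z = 0"
    using arg_cong[OF assms, of Im] by simp
  then show ?thesis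
    by (simp add: power2_eq_square)
qed

lemma Re_shadow_expect_traceless:
  assumes E: "complete_MUB_ensemble d E" and Q: "hermitian_m d Q" and traceless: "mtrace Q = 0"
  shows "Re (shadow_expect d E Q \<rho>) = (real d + 1) *
    (\<Sum>U\<in>E. \<Sum>b<d. Re (outcome_prob d \<rho> U b) * (Re (quad_form d (basis_coord U b) (\<lambda>a c. Q $$ (a, c))))\<^sup>2)"
proof -
  have card: "card E = d + 1" and unitary: "\<And>U. U \<in> E \<Longrightarrow> unitary_m d U"
    using E unfolding complete_MUB_ensemble_def by auto
  have Q_carrier: "Q \<in> carrier_mat d d"
    using Q unfolding hermitian_m_def by simp
  have Re_scale: "Re (of_nat (d + 1) * z) = (real d + 1) * Re z" for z
    by simp
  have "shadow_expect d E Q \<rho> = of_nat (d + 1) *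
      (\<Sum>U\<in>E. \<Sum>b<d. outcome_prob d \<rho> U b * (quad_form d (basis_coord U b) (\<lambda>a c. Q $$ (a, c)))\<^sup>2)"
    by (rule shadow_expect_traceless[OF card unitary Q_carrier traceless])
  then show ?thesis
    by (simp only: Re_scale Re_sum Re_mult_power2_real[OF cnj_quad_form_hermitian_m[OF Q]])
qed

lemma sum_Re_quad_form_sq_complete_MUB:
  assumes E: "complete_MUB_ensemble d E" and "d > 0" and Q: "hermitian_m d Q" and traceless: "mtrace Q = 0"
  shows "(\<Sum>U\<in>E. \<Sum>b<d. (Re (quad_form d (basis_coord U b) (\<lambda>a c. Q $$ (a, c))))\<^sup>2) = Re (mtrace (Q * Q))"
proof -
  have Q_carrier: "Q \<in> carrier_mat d d"
    using Q unfolding hermitian_m_def by simp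
  have "(\<Sum>a<d. Q $$ (a, a)) = 0"
    using traceless Q_carrier by (simp add: mtrace_def)
  then have "(\<Sum>U\<in>E. \<Sum>b<d. (quad_form d (basis_coord U b) (\<lambda>a c. Q $$ (a, c)))\<^sup>2) = mtrace (Q * Q)"
    by (simp add: sum_quad_form_sq_complete_MUB[OF E \<open>d > 0\<close>] mtrace_mult[OF Q_carrier Q_carrier])
  then have "Re (\<Sum>U\<in>E. \<Sum>b<d. (quad_form d (basis_coord U b) (\<lambda>a c. Q $$ (a, c)))\<^sup>2) = Re (mtrace (Q * Q))"
    by simp
  then show ?thesis
    using Re_mult_power2_real[OF cnj_quad_form_hermitian_m[OF Q], of 1] by (simp add: Re_sum)
qed

lemma Re_shadow_expect_le:
  assumes E: "complete_MUB_ensemble d E" and "d > 0" and Q: "hermitian_m d Q" and traceless: "mtrace Q = 0"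
    and \<rho>: "density_op d \<rho>"
  shows "Re (shadow_expect d E Q \<rho>) \<le> (real d + 1) * Re (mtrace (Q * Q))"
proof -
  let ?q = "\<lambda>U b. Re (quad_form d (basis_coord U b) (\<lambda>a c. Q $$ (a, c)))"
  have unitary: "\<And>U. U \<in> E \<Longrightarrow> unitary_m d U"
    using E unfolding complete_MUB_ensemble_def by auto
  have "(\<Sum>U\<in>E. \<Sum>b<d. Re (outcome_prob d \<rho> U b) * (?q U b)\<^sup>2) \<le> (\<Sum>U\<in>E. \<Sum>b<d. (?q U b)\<^sup>2)"
  proof (intro sum_mono)
    fix U b assume "U \<in> E" "b \<in> {..<d}"
    moreover from \<open>U \<in> E\<close> have "U \<in> carrier_mat d d"
      using unitary unfolding unitary_m_def by simp
    ultimately show "Re (outcome_prob d \<rho> U b) * (?q U b)\<^sup>2 \<le> (?q U b)\<^sup>2"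
      using outcome_prob_nonneg[OF \<rho>] Re_outcome_prob_le_one[OF \<rho> unitary]
      by (simp add: mult_left_le_one_le)
  qed
  then show ?thesis
    unfolding Re_shadow_expect_traceless[OF E Q traceless] sum_Re_quad_form_sq_complete_MUB[OF assms(1-4)]
    by (simp add: mult_left_mono)
qed

lemma ls_shadow_norm_sq_traceless:
  assumes E: "complete_MUB_ensemble d E" and "d > 0" and Q: "hermitian_m d Q" and traceless: "mtrace Q = 0"
  shows "ls_shadow_norm_sq d E Q = (real d + 1) / real d * Re (mtrace (Q * Q))"
proof -
  have unitary: "\<And>U. U \<in> E \<Longrightarrow> unitary_m d U"
    using E unfolding complete_MUB_ensemble_def by auto
  have "ls_shadow_norm_sq d E Q = (real d + 1) *
      (\<Sum>U\<in>E. \<Sum>b<d. 1 / real d * (Re (quad_form d (basis_coord U b) (\<lambda>a c. Q $$ (a, c))))\<^sup>2)"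
    unfolding ls_shadow_norm_sq_def Re_shadow_expect_traceless[OF E Q traceless]
    by (simp add: outcome_prob_maximally_mixed[OF unitary])
  then show ?thesis
    by (simp add: sum_divide_distrib[symmetric] sum_Re_quad_form_sq_complete_MUB[OF assms])
qed

lemma shadow_norm_sq_traceless_le:
  assumes "complete_MUB_ensemble d E" and "d > 0" and "hermitian_m d Q" and "mtrace Q = 0"
  shows "shadow_norm_sq d E Q \<le> (real d + 1) * Re (mtrace (Q * Q))"
  unfolding shadow_norm_sq_def
  using density_op_maximally_mixed[OF \<open>d > 0\<close>] Re_shadow_expect_le[OF assms]
  by (intro cSup_least) auto

lemma hermitian_m_traceless_part:
  assumes A: "hermitian_m d A"
  shows "hermitian_m d (A - (mtrace A / of_nat d) \<cdot>\<^sub>m 1\<^sub>m d)"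
proof -
  let ?B = "A - (mtrace A / of_nat d) \<cdot>\<^sub>m 1\<^sub>m d"
  have A_carrier: "A \<in> carrier_mat d d"
    using A unfolding hermitian_m_def by simp
  then have B: "?B \<in> carrier_mat d d"
    by (simp add: minus_carrier_mat)
  have "mat_adjoint ?B = ?B"
    by (rule eq_matI)
      (use A A_carrier mat_adjoint_carrier[OF B] in
        \<open>auto simp: index_mat_adjoint[OF B] hermitian_m_index cnj_mtrace_hermitian\<close>)
  then show ?thesis
    unfolding hermitian_m_def using B by simp
qed

lemma mtrace_traceless_part:
  assumes "A \<in> carrier_mat d d" and "d > 0"
  shows "mtrace (A - (mtrace A / of_nat d) \<cdot>\<^sub>m 1\<^sub>m d) = 0"
  using assms by (simp add: mtrace_def sum_subtractf)

theorem theorem1: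
  fixes n :: nat and E :: "complex mat set" and Obs :: "complex mat"
  assumes "complete_MUB_ensemble (2 ^ n) E"
    and "hermitian_m (2 ^ n) Obs"
  shows "let O0 = Obs - (mtrace Obs / 2 ^ n) \<cdot>\<^sub>m 1\<^sub>m (2 ^ n) in
     shadow_norm_sq (2 ^ n) E O0 \<le> (2 ^ n + 1) * Re (mtrace (O0 * O0)) \<and>
     ls_shadow_norm_sq (2 ^ n) E O0 = (2 ^ n + 1) / 2 ^ n * Re (mtrace (O0 * O0))"
proof -
  define d :: nat where "d = 2 ^ n"
  define O0 where "O0 = Obs - (mtrace Obs / of_nat d) \<cdot>\<^sub>m 1\<^sub>m d"
  have "d > 0"
    by (simp add: d_def)
  have E: "complete_MUB_ensemble d E" and Obs: "hermitian_m d Obs"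
    using assms by (simp_all add: d_def)
  have "hermitian_m d O0" and "mtrace O0 = 0"
    unfolding O0_def using hermitian_m_traceless_part[OF Obs] mtrace_traceless_part \<open>d > 0\<close> Obs
    by (auto simp: hermitian_m_def)
  note O0 = E \<open>d > 0\<close> this
  show ?thesis
    using shadow_norm_sq_traceless_le[OF O0] ls_shadow_norm_sq_traceless[OF O0]
    by (simp add: Let_def O0_def d_def)
qed

end
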